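(* Let $n,d$ be integers, $0<\alpha<1$, and $d_1=\lceil 1000\log n/\alpha^2\rceil$. Then $T(n,d,\alpha)\le T(n,d_1,\alpha/2)$, where $T(n,d,\alpha)$ denotes the VC dimension of the $(1+\alpha)$-separate contrastive learning problem for $\ell_2$-distances in dimension $d$ on a dataset of size $n$.
   Context: $V$ is a finite set with $|V|=n$. A query is a triple $(u,v,w)$ of elements of $V$, labeled either $(u,v^+,w^-)$ or $(u,w^+,v^-)$. In the $(1+\alpha)$-separate problem for $\ell_2$ in dimension $d$, an embedding $f:V\to\mathbb R^d$ satisfies the labeled query $(u,v^+,w^-)$ if $(1+\alpha)\|f(u)-f(v)\|_2<\|f(u)-f(w)\|_2$ (symmetrically for $(u,w^+,v^-)$). A set $Q$ of queries is shattered if for every labeling of $Q$ there exists $f:V\to\mathbb R^d$ satisfying all labeled queries; $T(n,d,\alpha)$ is the maximum size of a shattered set. *)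

theory Defs
  imports Complex_Main
begin

text \<open>Euclidean (l2) distance in R^d, points represented as functions nat => real
  of which only the coordinates i < d are relevant.\<close>
definition l2dist :: "nat \<Rightarrow> (nat \<Rightarrow> real) \<Rightarrow> (nat \<Rightarrow> real) \<Rightarrow> real" where
  "l2dist d x y = sqrt (\<Sum>i<d. (x i - y i)^2)"

text \<open>A query is a triple (u,v,w). A label b = True means (u, v^+, w^-),
  b = False means (u, w^+, v^-).\<close>
definition satisfies :: "nat \<Rightarrow> real \<Rightarrow> ('a \<Rightarrow> nat \<Rightarrow> real) \<Rightarrow> 'a \<times> 'a \<times> 'a \<Rightarrow> bool \<Rightarrow> bool" where
  "satisfies d \<alpha> f q b = (case q of (u, v, w) \<Rightarrow>
     (if b then (1 + \<alpha>) * l2dist d (f u) (f v) < l2dist d (f u) (f w)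
           else (1 + \<alpha>) * l2dist d (f u) (f w) < l2dist d (f u) (f v)))"

definition shattered :: "nat \<Rightarrow> real \<Rightarrow> 'a set \<Rightarrow> ('a \<times> 'a \<times> 'a) set \<Rightarrow> bool" where
  "shattered d \<alpha> V Q \<longleftrightarrow> Q \<subseteq> V \<times> V \<times> V \<and>
     (\<forall>L :: 'a \<times> 'a \<times> 'a \<Rightarrow> bool. \<exists>f :: 'a \<Rightarrow> nat \<Rightarrow> real.
        \<forall>q\<in>Q. satisfies d \<alpha> f q (L q))"

text \<open>T(n,d,alpha): maximum size of a shattered set of queries on a ground set of size n
  (we take V = {0..<n}; the value only depends on |V|).\<close>
definition T :: "nat \<Rightarrow> nat \<Rightarrow> real \<Rightarrow> nat" where
  "T n d \<alpha> = Max {card Q | Q. shattered d \<alpha> {0..<n} Q}"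

end

theory Submission
  imports Defs "HOL-Probability.Probability"
begin

text \<open>Project the embedding by a \<open>k \<times> d\<close> matrix \<open>R\<close> of random signs (Achlioptas' form of
  the Johnson--Lindenstrauss lemma). For a fixed \<open>z\<close>, \<open>|R z|\<^sup>2\<close> is a sum of \<open>k\<close> independent
  copies of \<open>\<langle>r, z\<rangle>\<^sup>2\<close> with \<open>r\<close> a uniform sign vector, and Chernoff bounds show that it lies
  within a factor \<open>1 \<plusminus> \<epsilon>\<close> of \<open>k |z|\<^sup>2\<close> except with probability \<open>2 exp (- k \<epsilon>\<^sup>2 / 8)\<close>.
  For \<open>\<epsilon> = \<alpha> / 4\<close> and \<open>k \<ge> 1000 ln n / \<alpha>\<^sup>2\<close> a union bound over the \<open>n\<^sup>2\<close> differences
  \<open>f u - f v\<close> yields one sign matrix distorting all of them by at most \<open>1 \<plusminus> \<alpha> / 4\<close>, and such a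
  distortion turns every \<open>(1 + \<alpha>)\<close>-separation into a \<open>(1 + \<alpha> / 2)\<close>-separation. So every set
  of queries shattered in dimension \<open>d\<close> is shattered in dimension \<open>k\<close>.
  Probabilities are expressed by counting in the finite set of all sign matrices.\<close>

section \<open>Exponential and Gaussian estimates\<close>

lemma exp_plus_exp_neg_le: "exp x + exp (- x) \<le> 2 * exp (x^2 / 2)" for x :: real
proof -
  have "(exp y + exp (- y)) / 2 \<le> exp (y^2 / 2)" if "0 \<le> y" for y :: real
  proof -
    have pos: "0 < 1 + (1/2) * (exp (2*y) - 1)" by (simp add: algebra_simps add_pos_pos)
    have "exp (- (2*y) * (1/2)) * exp (2*y) = exp y"
      by (simp flip: exp_add)
    then have "(exp y + exp (- y)) / 2 = exp (- (2*y) * (1/2)) * (1 + (1/2) * (exp (2*y) - 1))"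
      by (simp add: algebra_simps)
    also have "\<dots> = exp (- (2*y) * (1/2) + ln (1 + (1/2) * (exp (2*y) - 1)))"
      using pos by (subst exp_add) simp
    also have "\<dots> \<le> exp ((2*y)^2 / 8)"
      \<comment> \<open>Hoeffding's lemma for a fair coin with values \<open>0\<close> and \<open>2 y\<close>\<close>
      using Hoeffdings_lemma_aux[of "2*y" "1/2"] that by simp
    finally show ?thesis by (simp add: power2_eq_square)
  qed
  from this[of "\<bar>x\<bar>"] show ?thesis by (cases "0 \<le> x") (simp_all add: add.commute)
qed

lemma exp_neg_le_quadratic: "0 \<le> x \<Longrightarrow> exp (- x) \<le> 1 - x + x^2 / 2" for x :: real
proof -
  assume x: "0 \<le> x"
  have deriv: "((\<lambda>t. 1 - t + t^2 / 2 - exp (- t)) has_real_derivative (t - 1 + exp (- t))) (at t)"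
    for t :: real
    by (auto intro!: derivative_eq_intros simp: power2_eq_square)
  have "(\<lambda>t. 1 - t + t^2 / 2 - exp (- t)) 0 \<le> (\<lambda>t. 1 - t + t^2 / 2 - exp (- t)) x"
  proof (rule DERIV_nonneg_imp_nondecreasing[OF x])
    fix t
    show "\<exists>y. ((\<lambda>t. 1 - t + t^2 / 2 - exp (- t)) has_real_derivative y) (at t) \<and> 0 \<le> y"
      using deriv[of t] exp_ge_add_one_self[of "- t"] by (intro exI[of _ "t - 1 + exp (- t)"]) auto
  qed
  then show ?thesis by simp
qed

lemma inverse_sqrt_le_exp:
  fixes t :: real
  assumes "0 \<le> t" "t \<le> 1/4"
  shows "1 / sqrt (1 - 2*t) \<le> exp (t + 2*t^2)"
proof -
  define s where "s = 2*t + 4*t^2"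
  have "t^2 \<le> t / 4" "t^3 \<le> t / 16"
    using mult_left_mono[OF assms(2) assms(1)] mult_left_mono[of "t^2" "t/4" t] assms
    by (auto simp: power2_eq_square power3_eq_cube)
  then have "0 \<le> t^2 * (2 - 4*t - 8*t^2 - 16*t^3)"
    using assms by (intro mult_nonneg_nonneg) auto
  moreover have "(1 - 2*t) * (1 + s + s^2 / 2) = 1 + t^2 * (2 - 4*t - 8*t^2 - 16*t^3)"
    by (simp add: s_def field_simps power2_eq_square power3_eq_cube)
  moreover have "(1 - 2*t) * (1 + s + s^2 / 2) \<le> (1 - 2*t) * exp s"
    using assms exp_lower_Taylor_quadratic[of s] by (intro mult_left_mono) (auto simp: s_def)
  ultimately have "1 / (1 - 2*t) \<le> exp s"
    using assms by (simp add: field_simps)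
  then have "sqrt (1 / (1 - 2*t)) \<le> sqrt ((exp (t + 2*t^2))^2)"
    by (simp add: s_def algebra_simps flip: exp_double)
  then show ?thesis by (simp add: real_sqrt_divide)
qed

lemma std_normal_density_mult_exp_linear:
  "std_normal_density g * exp (c * g) = exp (c^2 / 2) * normal_density c 1 g"
proof -
  have "- g\<^sup>2 / 2 + c * g = c^2 / 2 + (- (g - c)\<^sup>2 / 2)"
    by (simp add: power2_eq_square field_simps)
  then have "exp (- g\<^sup>2 / 2) * exp (c * g) = exp (c^2 / 2) * exp (- (g - c)\<^sup>2 / 2)"
    by (metis exp_add)
  then show ?thesis
    by (simp add: std_normal_density_def normal_density_def)
qed

lemma integral_std_normal_exp_linear:
  "integrable lborel (\<lambda>g. std_normal_density g * exp (c * g))"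
  "(\<integral>g. std_normal_density g * exp (c * g) \<partial>lborel) = exp (c^2 / 2)"
  unfolding std_normal_density_mult_exp_linear by auto

lemma std_normal_density_mult_exp_sq:
  assumes "t < 1/2"
  shows "std_normal_density g * exp (t * g^2)
    = (1 / sqrt (1 - 2*t)) * normal_density 0 (1 / sqrt (1 - 2*t)) g"
proof -
  have pos: "0 < 1 - 2*t" using assms by simp
  have "exp (- g\<^sup>2 / 2) * exp (t * g^2) = exp (- (g^2) * (1 - 2*t) / 2)"
    by (simp add: exp_add[symmetric] algebra_simps)
  moreover have "sqrt (2 * pi * (1 / sqrt (1 - 2*t))\<^sup>2) = sqrt (2 * pi) / sqrt (1 - 2*t)"
    using pos by (simp add: power_divide real_sqrt_divide)
  ultimately show ?thesis
    using pos by (simp add: std_normal_density_def normal_density_def power_divide field_simps)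
qed

lemma integral_std_normal_exp_sq:
  assumes "t < 1/2"
  shows "integrable lborel (\<lambda>g. std_normal_density g * exp (t * g^2))"
    and "(\<integral>g. std_normal_density g * exp (t * g^2) \<partial>lborel) = 1 / sqrt (1 - 2*t)"
  unfolding std_normal_density_mult_exp_sq[OF assms] using assms by auto

section \<open>Moments over sign vectors\<close>

definition dot :: "nat \<Rightarrow> (nat \<Rightarrow> real) \<Rightarrow> (nat \<Rightarrow> real) \<Rightarrow> real" where
  "dot d x y = (\<Sum>i<d. x i * y i)"

definition sq_norm :: "nat \<Rightarrow> (nat \<Rightarrow> real) \<Rightarrow> real" where
  "sq_norm d z = (\<Sum>i<d. (z i)^2)"

lemma sq_norm_nonneg: "0 \<le> sq_norm d z"
  by (simp add: sq_norm_def sum_nonneg)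

lemma l2dist_eq_sqrt_sq_norm: "l2dist d x y = sqrt (sq_norm d (x - y))"
  by (simp add: l2dist_def sq_norm_def)

lemma dot_eq_0_if_sq_norm_eq_0:
  assumes "sq_norm d z = 0"
  shows "dot d r z = 0"
proof -
  have "\<forall>i\<in>{..<d}. (z i)^2 = 0"
    using assms unfolding sq_norm_def by (subst sum_nonneg_eq_0_iff[symmetric]) auto
  then show ?thesis by (simp add: dot_def)
qed

definition sign_vectors :: "nat \<Rightarrow> (nat \<Rightarrow> real) set" where
  "sign_vectors d = PiE {..<d} (\<lambda>_. {-1, 1})"

lemma finite_sign_vectors [simp]: "finite (sign_vectors d)"
  by (simp add: sign_vectors_def finite_PiE)

lemma card_sign_vectors: "card (sign_vectors d) = 2^d"
  by (simp add: sign_vectors_def card_PiE numeral_2_eq_2)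

lemma sign_vectors_mult_self:
  assumes "r \<in> sign_vectors d" "i < d"
  shows "r i * r i = 1"
proof -
  have "r i \<in> {-1, 1}" using assms by (auto simp: sign_vectors_def PiE_iff)
  then show ?thesis by auto
qed

lemma sum_sign_vectors_mult_eq_0:
  assumes "i < d" "j < d" "i \<noteq> j"
  shows "(\<Sum>r\<in>sign_vectors d. r i * r j) = 0"
proof -
  define flip where "flip = (\<lambda>r::nat \<Rightarrow> real. r(i := - r i))"
  have "flip (flip r) = r" for r by (simp add: flip_def)
  moreover have "flip r \<in> sign_vectors d" if "r \<in> sign_vectors d" for r
    using assms that by (auto simp: flip_def sign_vectors_def PiE_iff extensional_def)
  ultimately have bij: "bij_betw flip (sign_vectors d) (sign_vectors d)"
    by (intro bij_betw_byWitness[where f' = flip]) auto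
  have "(\<Sum>r\<in>sign_vectors d. r i * r j) = (\<Sum>r\<in>sign_vectors d. flip r i * flip r j)"
    using sum.reindex_bij_betw[OF bij, of "\<lambda>r. r i * r j"] by simp
  also have "\<dots> = - (\<Sum>r\<in>sign_vectors d. r i * r j)"
    using assms by (simp add: flip_def sum_negf)
  finally show ?thesis by simp
qed

lemma sum_sign_vectors_dot_sq: "(\<Sum>r\<in>sign_vectors d. (dot d r z)^2) = 2^d * sq_norm d z"
proof -
  have "(\<Sum>r\<in>sign_vectors d. (dot d r z)^2)
      = (\<Sum>r\<in>sign_vectors d. \<Sum>i<d. \<Sum>j<d. (r i * r j) * (z i * z j))"
    by (simp add: dot_def power2_eq_square sum_product mult_ac)
  also have "\<dots> = (\<Sum>i<d. \<Sum>j<d. (\<Sum>r\<in>sign_vectors d. r i * r j) * (z i * z j))"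
    by (simp add: sum.swap[of _ "sign_vectors d"] sum_distrib_right)
  also have "\<dots> = (\<Sum>i<d. \<Sum>j<d. if i = j then 2^d * (z i * z j) else 0)"
    by (intro sum.cong refl)
      (auto simp: sum_sign_vectors_mult_eq_0 sign_vectors_mult_self card_sign_vectors)
  also have "\<dots> = 2^d * sq_norm d z"
    by (simp add: sq_norm_def sum_distrib_left power2_eq_square)
  finally show ?thesis .
qed

lemma sum_sign_vectors_exp_dot_le:
  "(\<Sum>r\<in>sign_vectors d. exp (c * dot d r z)) \<le> 2^d * exp (c^2 * sq_norm d z / 2)"
proof -
  have "(\<Sum>r\<in>sign_vectors d. exp (c * dot d r z))
      = (\<Sum>r\<in>sign_vectors d. \<Prod>i<d. exp (c * r i * z i))"
    by (simp add: dot_def sum_distrib_left exp_sum mult.assoc)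
  also have "\<dots> = (\<Prod>i<d. \<Sum>y\<in>{-1, 1}. exp (c * y * z i))"
    unfolding sign_vectors_def by (rule prod_sum_PiE[symmetric]) auto
  also have "\<dots> = (\<Prod>i<d. exp (c * z i) + exp (- (c * z i)))"
    by (simp add: add.commute)
  also have "\<dots> \<le> (\<Prod>i<d. 2 * exp ((c * z i)^2 / 2))"
    by (intro prod_mono conjI exp_plus_exp_neg_le add_nonneg_nonneg) auto
  also have "\<dots> = 2^d * exp (c^2 * sq_norm d z / 2)"
    by (simp add: prod.distrib exp_sum[symmetric] sq_norm_def sum_divide_distrib
        sum_distrib_left power_mult_distrib)
  finally show ?thesis .
qed

text \<open>The moment generating function of \<open>\<langle>r, z\<rangle>\<^sup>2\<close> is reduced to that of \<open>\<langle>r, z\<rangle>\<close> by writing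
  \<open>exp (b\<^sup>2 x\<^sup>2 / 2)\<close> as the Gaussian average of \<open>exp (b x g)\<close>.\<close>

lemma sum_sign_vectors_exp_dot_sq_le:
  assumes "0 \<le> l" "2 * l * sq_norm d z < 1"
  shows "(\<Sum>r\<in>sign_vectors d. exp (l * (dot d r z)^2)) \<le> 2^d / sqrt (1 - 2 * l * sq_norm d z)"
proof -
  define b where "b = sqrt (2 * l)"
  define N where "N = sq_norm d z"
  have b2: "b^2 = 2 * l" using assms by (simp add: b_def)
  have lin: "integrable lborel (\<lambda>g. std_normal_density g * exp ((b * dot d r z) * g))" for r
    by (rule integral_std_normal_exp_linear)
  have sq: "integrable lborel (\<lambda>g. std_normal_density g * exp ((l * N) * g^2))"
    using assms by (intro integral_std_normal_exp_sq) (simp add: N_def)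
  have "(\<Sum>r\<in>sign_vectors d. exp (l * (dot d r z)^2))
      = (\<Sum>r\<in>sign_vectors d. \<integral>g. std_normal_density g * exp ((b * dot d r z) * g) \<partial>lborel)"
    by (simp add: integral_std_normal_exp_linear power_mult_distrib b2)
  also have "\<dots> = (\<integral>g. (\<Sum>r\<in>sign_vectors d. std_normal_density g * exp ((b * g) * dot d r z)) \<partial>lborel)"
    using lin by (simp add: Bochner_Integration.integral_sum mult_ac)
  also have "\<dots> \<le> (\<integral>g. 2^d * (std_normal_density g * exp ((l * N) * g^2)) \<partial>lborel)"
  proof (rule integral_mono)
    show "integrable lborel
        (\<lambda>g. \<Sum>r\<in>sign_vectors d. std_normal_density g * exp ((b * g) * dot d r z))"
      using lin by (simp add: mult_ac)
    show "integrable lborel (\<lambda>g. 2^d * (std_normal_density g * exp ((l * N) * g^2)))"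
      using sq by simp
    fix g
    have "(\<Sum>r\<in>sign_vectors d. std_normal_density g * exp ((b * g) * dot d r z))
        = std_normal_density g * (\<Sum>r\<in>sign_vectors d. exp ((b * g) * dot d r z))"
      by (simp add: sum_distrib_left)
    also have "\<dots> \<le> std_normal_density g * (2^d * exp ((b * g)^2 * N / 2))"
      unfolding N_def by (intro mult_left_mono sum_sign_vectors_exp_dot_le) simp
    also have "\<dots> = 2^d * (std_normal_density g * exp ((l * N) * g^2))"
      by (simp add: power_mult_distrib b2 mult_ac)
    finally show "(\<Sum>r\<in>sign_vectors d. std_normal_density g * exp ((b * g) * dot d r z))
        \<le> 2^d * (std_normal_density g * exp ((l * N) * g^2))" .
  qed
  also have "\<dots> = 2^d / sqrt (1 - 2 * l * N)"
    using assms integral_std_normal_exp_sq(2)[of "l * N"] by (simp add: N_def mult.assoc)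
  finally show ?thesis by (simp add: N_def)
qed

text \<open>The fourth moment is read off the second-order term of the moment generating function
  at the small parameter \<open>\<mu> = 1 / (100 |z|\<^sup>2)\<close>.\<close>

lemma sum_sign_vectors_dot_pow4_le:
  assumes "0 < sq_norm d z"
  shows "(\<Sum>r\<in>sign_vectors d. (dot d r z)^4) \<le> 2^d * (16/5) * (sq_norm d z)^2"
proof -
  define N where "N = sq_norm d z"
  define S where "S = (\<Sum>r\<in>sign_vectors d. (dot d r z)^4)"
  define \<mu> where "\<mu> = 1 / (100 * N)"
  have N: "0 < N" using assms by (simp add: N_def)
  have \<mu>: "0 \<le> \<mu>" "2 * \<mu> * N = 1/50" "\<mu> * (2^d * N) = 2^d / 100"
    using N by (auto simp: \<mu>_def)
  have "(\<Sum>r\<in>sign_vectors d. 1 + \<mu> * (dot d r z)^2 + (\<mu> * (dot d r z)^2)^2 / 2)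
      = 2^d + \<mu> * (2^d * N) + \<mu>^2 / 2 * S"
    by (simp add: S_def N_def sum.distrib sum_distrib_left[symmetric] sum_sign_vectors_dot_sq
        card_sign_vectors power_mult_distrib sum_divide_distrib[symmetric] mult_ac)
  moreover have "(\<Sum>r\<in>sign_vectors d. 1 + \<mu> * (dot d r z)^2 + (\<mu> * (dot d r z)^2)^2 / 2)
      \<le> (\<Sum>r\<in>sign_vectors d. exp (\<mu> * (dot d r z)^2))"
    using \<mu> by (intro sum_mono exp_lower_Taylor_quadratic) auto
  moreover have "(\<Sum>r\<in>sign_vectors d. exp (\<mu> * (dot d r z)^2)) \<le> 2^d / sqrt (1 - 1/50)"
    using sum_sign_vectors_exp_dot_sq_le[of \<mu> d z, folded N_def] \<mu>(1,2) by simp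
  moreover have "2^d / sqrt (1 - 1/50) \<le> 2^d * (101016/100000 :: real)"
  proof -
    have "sqrt (50/49) \<le> sqrt ((101016/100000)^2 :: real)"
      by (subst real_sqrt_le_iff) (simp add: power2_eq_square)
    then show ?thesis by (simp add: real_sqrt_divide)
  qed
  ultimately have "\<mu>^2 / 2 * S \<le> 2^d * (16/100000)"
    using \<mu>(3) by linarith
  have "S = (\<mu>^2 / 2 * S) * (20000 * N^2)"
    using N by (simp add: \<mu>_def power2_eq_square)
  also have "\<dots> \<le> 2^d * (16/100000) * (20000 * N^2)"
    using \<open>\<mu>^2 / 2 * S \<le> 2^d * (16/100000)\<close> by (intro mult_right_mono) simp_all
  also have "\<dots> = 2^d * (16/5) * N^2" by simp
  finally show ?thesis by (simp add: S_def N_def)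
qed

lemma sum_sign_vectors_exp_dot_sq_le_exp:
  assumes "0 \<le> l" "l * sq_norm d z \<le> 1/4"
  shows "(\<Sum>r\<in>sign_vectors d. exp (l * (dot d r z)^2))
    \<le> 2^d * exp (l * sq_norm d z + 2 * (l * sq_norm d z)^2)"
proof -
  have "(\<Sum>r\<in>sign_vectors d. exp (l * (dot d r z)^2)) \<le> 2^d * (1 / sqrt (1 - 2 * (l * sq_norm d z)))"
    using sum_sign_vectors_exp_dot_sq_le[of l d z] assms by (simp add: mult.assoc)
  also have "\<dots> \<le> 2^d * exp (l * sq_norm d z + 2 * (l * sq_norm d z)^2)"
    using assms sq_norm_nonneg[of d z] by (intro mult_left_mono inverse_sqrt_le_exp) auto
  finally show ?thesis .
qed

lemma sum_sign_vectors_exp_neg_dot_sq_le_exp: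
  assumes "0 < sq_norm d z" "0 \<le> l"
  shows "(\<Sum>r\<in>sign_vectors d. exp (- l * (dot d r z)^2))
    \<le> 2^d * exp (- (l * sq_norm d z) + 8/5 * (l * sq_norm d z)^2)"
proof -
  have "(\<Sum>r\<in>sign_vectors d. exp (- l * (dot d r z)^2))
      \<le> (\<Sum>r\<in>sign_vectors d. 1 - l * (dot d r z)^2 + (l * (dot d r z)^2)^2 / 2)"
    using assms by (intro sum_mono) (simp add: exp_neg_le_quadratic)
  also have "\<dots> = 2^d - l * (2^d * sq_norm d z) + l^2 / 2 * (\<Sum>r\<in>sign_vectors d. (dot d r z)^4)"
    by (simp add: sum.distrib sum_subtractf sum_distrib_left[symmetric] sum_sign_vectors_dot_sq
        card_sign_vectors power_mult_distrib sum_divide_distrib[symmetric] mult_ac)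
  also have "\<dots> \<le> 2^d - l * (2^d * sq_norm d z) + l^2 / 2 * (2^d * (16/5) * (sq_norm d z)^2)"
    using assms by (intro add_left_mono mult_left_mono sum_sign_vectors_dot_pow4_le) auto
  also have "\<dots> = 2^d * (1 + (- (l * sq_norm d z) + 8/5 * (l * sq_norm d z)^2))"
    by (simp add: algebra_simps power_mult_distrib)
  also have "\<dots> \<le> 2^d * exp (- (l * sq_norm d z) + 8/5 * (l * sq_norm d z)^2)"
    by (intro mult_left_mono exp_ge_add_one_self) simp
  finally show ?thesis .
qed

section \<open>Random sign matrices\<close>

definition sign_matrices :: "nat \<Rightarrow> nat \<Rightarrow> (nat \<Rightarrow> nat \<Rightarrow> real) set" where
  "sign_matrices k d = PiE {..<k} (\<lambda>_. sign_vectors d)"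

definition mat_vec :: "nat \<Rightarrow> (nat \<Rightarrow> nat \<Rightarrow> real) \<Rightarrow> (nat \<Rightarrow> real) \<Rightarrow> nat \<Rightarrow> real" where
  "mat_vec d R z = (\<lambda>j. dot d (R j) z)"

lemma finite_sign_matrices [simp]: "finite (sign_matrices k d)"
  by (simp add: sign_matrices_def finite_PiE)

lemma card_sign_matrices: "card (sign_matrices k d) = (2^d)^k"
  by (simp add: sign_matrices_def card_PiE card_sign_vectors)

lemma sign_matrices_nonempty: "sign_matrices k d \<noteq> {}"
  using card_sign_matrices[of k d] by (metis card.empty power_not_zero zero_neq_numeral)

lemma mat_vec_diff: "mat_vec d R (x - y) = mat_vec d R x - mat_vec d R y"
  by (simp add: mat_vec_def dot_def fun_eq_iff sum_subtractf right_diff_distrib)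

lemma sum_sign_matrices_exp_sq_norm:
  "(\<Sum>R\<in>sign_matrices k d. exp (l * sq_norm k (mat_vec d R z)))
    = (\<Sum>r\<in>sign_vectors d. exp (l * (dot d r z)^2))^k"
proof -
  have "(\<Sum>R\<in>sign_matrices k d. exp (l * sq_norm k (mat_vec d R z)))
      = (\<Sum>R\<in>sign_matrices k d. \<Prod>j<k. exp (l * (dot d (R j) z)^2))"
    by (simp add: sq_norm_def mat_vec_def sum_distrib_left exp_sum)
  also have "\<dots> = (\<Prod>j<k. \<Sum>r\<in>sign_vectors d. exp (l * (dot d r z)^2))"
    unfolding sign_matrices_def by (rule prod_sum_PiE[symmetric]) auto
  finally show ?thesis by simp
qed

lemma card_le_sum_exp:
  assumes "finite A"
  shows "real (card {x\<in>A. c \<le> F x}) \<le> (\<Sum>x\<in>A. exp (F x)) / exp c"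
proof -
  have "real (card {x\<in>A. c \<le> F x}) = (\<Sum>x\<in>{x\<in>A. c \<le> F x}. 1)" by simp
  also have "\<dots> \<le> (\<Sum>x\<in>{x\<in>A. c \<le> F x}. exp (F x - c))" by (intro sum_mono) simp
  also have "\<dots> \<le> (\<Sum>x\<in>A. exp (F x - c))" by (intro sum_mono2) (use assms in auto)
  also have "\<dots> = (\<Sum>x\<in>A. exp (F x)) / exp c" by (simp add: exp_diff sum_divide_distrib)
  finally show ?thesis .
qed

text \<open>Exponential Markov inequality for \<open>l |R z|\<^sup>2\<close>, where \<open>l\<close> may have either sign.\<close>

lemma card_sign_matrices_tail:
  assumes "(\<Sum>r\<in>sign_vectors d. exp (l * (dot d r z)^2)) \<le> 2^d * exp b"
  shows "real (card {R\<in>sign_matrices k d. c \<le> l * sq_norm k (mat_vec d R z)})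
    \<le> card (sign_matrices k d) * exp (k * b - c)"
proof -
  have "real (card {R\<in>sign_matrices k d. c \<le> l * sq_norm k (mat_vec d R z)})
      \<le> (\<Sum>R\<in>sign_matrices k d. exp (l * sq_norm k (mat_vec d R z))) / exp c"
    by (rule card_le_sum_exp) simp
  also have "\<dots> = (\<Sum>r\<in>sign_vectors d. exp (l * (dot d r z)^2))^k / exp c"
    by (simp only: sum_sign_matrices_exp_sq_norm)
  also have "\<dots> \<le> (2^d * exp b)^k / exp c"
    using assms by (intro divide_right_mono power_mono sum_nonneg) auto
  also have "\<dots> = card (sign_matrices k d) * exp (k * b - c)"
    by (simp add: card_sign_matrices power_mult_distrib exp_diff exp_of_nat_mult)
  finally show ?thesis .
qed

lemma card_sq_norm_upper_tail:
  assumes N: "0 < sq_norm d z" and \<epsilon>: "0 < \<epsilon>" "\<epsilon> \<le> 1"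
  shows "real (card {R\<in>sign_matrices k d. (1 + \<epsilon>) * k * sq_norm d z \<le> sq_norm k (mat_vec d R z)})
    \<le> card (sign_matrices k d) * exp (- real k * \<epsilon>^2 / 8)"
proof -
  define l where "l = \<epsilon> / (4 * sq_norm d z)"
  have l: "0 < l" "l * sq_norm d z = \<epsilon> / 4" using N \<epsilon> by (auto simp: l_def)
  have c: "(1 + \<epsilon>) * k * (\<epsilon> / 4) = l * ((1 + \<epsilon>) * k * sq_norm d z)"
    unfolding l(2)[symmetric] by (simp add: mult_ac)
  have "(1 + \<epsilon>) * k * sq_norm d z \<le> x \<longleftrightarrow> (1 + \<epsilon>) * k * (\<epsilon> / 4) \<le> l * x" for x
    unfolding c by (rule mult_le_cancel_left_pos[OF l(1), symmetric])
  then have sets: "{R\<in>sign_matrices k d. (1 + \<epsilon>) * k * sq_norm d z \<le> sq_norm k (mat_vec d R z)}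
      = {R\<in>sign_matrices k d. (1 + \<epsilon>) * k * (\<epsilon> / 4) \<le> l * sq_norm k (mat_vec d R z)}"
    by (simp only:)
  have "(\<Sum>r\<in>sign_vectors d. exp (l * (dot d r z)^2)) \<le> 2^d * exp (\<epsilon> / 4 + 2 * (\<epsilon> / 4)^2)"
    using sum_sign_vectors_exp_dot_sq_le_exp[of l d z] l \<epsilon> by simp
  then have "real (card {R\<in>sign_matrices k d. (1 + \<epsilon>) * k * sq_norm d z \<le> sq_norm k (mat_vec d R z)})
      \<le> card (sign_matrices k d) * exp (k * (\<epsilon> / 4 + 2 * (\<epsilon> / 4)^2) - (1 + \<epsilon>) * k * (\<epsilon> / 4))"
    unfolding sets by (rule card_sign_matrices_tail)
  also have "k * (\<epsilon> / 4 + 2 * (\<epsilon> / 4)^2) - (1 + \<epsilon>) * k * (\<epsilon> / 4) = - real k * \<epsilon>^2 / 8"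
    by (simp add: field_simps power2_eq_square)
  finally show ?thesis .
qed

lemma card_sq_norm_lower_tail:
  assumes N: "0 < sq_norm d z" and \<epsilon>: "0 < \<epsilon>"
  shows "real (card {R\<in>sign_matrices k d. sq_norm k (mat_vec d R z) \<le> (1 - \<epsilon>) * k * sq_norm d z})
    \<le> card (sign_matrices k d) * exp (- real k * \<epsilon>^2 / 8)"
proof -
  define l where "l = \<epsilon> / (4 * sq_norm d z)"
  have l: "0 < l" "l * sq_norm d z = \<epsilon> / 4" using N \<epsilon> by (auto simp: l_def)
  have c: "- ((1 - \<epsilon>) * k * (\<epsilon> / 4)) = - l * ((1 - \<epsilon>) * k * sq_norm d z)"
    unfolding l(2)[symmetric] by (simp add: mult_ac)
  have "x \<le> (1 - \<epsilon>) * k * sq_norm d z \<longleftrightarrow> - ((1 - \<epsilon>) * k * (\<epsilon> / 4)) \<le> - l * x" for x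
    unfolding c using l(1) by (intro mult_le_cancel_left_neg[symmetric]) simp
  then have sets: "{R\<in>sign_matrices k d. sq_norm k (mat_vec d R z) \<le> (1 - \<epsilon>) * k * sq_norm d z}
      = {R\<in>sign_matrices k d. - ((1 - \<epsilon>) * k * (\<epsilon> / 4)) \<le> - l * sq_norm k (mat_vec d R z)}"
    by (simp only:)
  have "(\<Sum>r\<in>sign_vectors d. exp (- l * (dot d r z)^2))
      \<le> 2^d * exp (- (\<epsilon> / 4) + 8/5 * (\<epsilon> / 4)^2)"
    using sum_sign_vectors_exp_neg_dot_sq_le_exp[of d z l] N l by simp
  then have "real (card {R\<in>sign_matrices k d. sq_norm k (mat_vec d R z) \<le> (1 - \<epsilon>) * k * sq_norm d z})
      \<le> card (sign_matrices k d) * exp (k * (- (\<epsilon> / 4) + 8/5 * (\<epsilon> / 4)^2) - - ((1 - \<epsilon>) * k * (\<epsilon> / 4)))"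
    unfolding sets by (rule card_sign_matrices_tail)
  also have "\<dots> \<le> card (sign_matrices k d) * exp (- real k * \<epsilon>^2 / 8)"
  proof -
    have "k * (- (\<epsilon> / 4) + 8/5 * (\<epsilon> / 4)^2) - - ((1 - \<epsilon>) * k * (\<epsilon> / 4)) = - 3/20 * k * \<epsilon>^2"
      by (simp add: field_simps power2_eq_square)
    also have "\<dots> \<le> - real k * \<epsilon>^2 / 8" by simp
    finally show ?thesis by (intro mult_left_mono) simp_all
  qed
  finally show ?thesis .
qed

definition preserves_sq_norm ::
    "real \<Rightarrow> nat \<Rightarrow> nat \<Rightarrow> (nat \<Rightarrow> nat \<Rightarrow> real) \<Rightarrow> (nat \<Rightarrow> real) \<Rightarrow> bool" where
  "preserves_sq_norm \<epsilon> k d R z \<longleftrightarrow>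
     (1 - \<epsilon>) * k * sq_norm d z \<le> sq_norm k (mat_vec d R z) \<and>
     sq_norm k (mat_vec d R z) \<le> (1 + \<epsilon>) * k * sq_norm d z"

lemma card_not_preserves_sq_norm:
  assumes "0 < \<epsilon>" "\<epsilon> \<le> 1"
  shows "real (card {R\<in>sign_matrices k d. \<not> preserves_sq_norm \<epsilon> k d R z})
    \<le> 2 * card (sign_matrices k d) * exp (- real k * \<epsilon>^2 / 8)"
proof (cases "sq_norm d z = 0")
  case True
  then have "mat_vec d R z = (\<lambda>_. 0)" for R
    by (simp add: mat_vec_def dot_eq_0_if_sq_norm_eq_0)
  moreover have "sq_norm k (\<lambda>_. 0) = 0" by (simp add: sq_norm_def)
  ultimately show ?thesis using True by (simp add: preserves_sq_norm_def)
next
  case False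
  then have N: "0 < sq_norm d z" using sq_norm_nonneg[of d z] by linarith
  let ?up = "{R\<in>sign_matrices k d. (1 + \<epsilon>) * k * sq_norm d z \<le> sq_norm k (mat_vec d R z)}"
  let ?low = "{R\<in>sign_matrices k d. sq_norm k (mat_vec d R z) \<le> (1 - \<epsilon>) * k * sq_norm d z}"
  have "{R\<in>sign_matrices k d. \<not> preserves_sq_norm \<epsilon> k d R z} \<subseteq> ?up \<union> ?low"
    by (auto simp: preserves_sq_norm_def)
  then have "card {R\<in>sign_matrices k d. \<not> preserves_sq_norm \<epsilon> k d R z} \<le> card (?up \<union> ?low)"
    by (intro card_mono) simp_all
  also have "\<dots> \<le> card ?up + card ?low"
    by (rule card_Un_le)
  finally have "real (card {R\<in>sign_matrices k d. \<not> preserves_sq_norm \<epsilon> k d R z})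
      \<le> real (card ?up) + real (card ?low)"
    by linarith
  also have "\<dots> \<le> card (sign_matrices k d) * exp (- real k * \<epsilon>^2 / 8)
      + card (sign_matrices k d) * exp (- real k * \<epsilon>^2 / 8)"
    by (intro add_mono card_sq_norm_upper_tail card_sq_norm_lower_tail N assms(1,2))
  also have "\<dots> = 2 * card (sign_matrices k d) * exp (- real k * \<epsilon>^2 / 8)"
    by simp
  finally show ?thesis .
qed

lemma counting_union_bound:
  fixes p :: real
  assumes "finite A" "A \<noteq> {}" "finite I"
    and bad: "\<And>i. i \<in> I \<Longrightarrow> real (card {x\<in>A. \<not> P i x}) \<le> p * card A"
    and small: "card I * p < 1"
  shows "\<exists>x\<in>A. \<forall>i\<in>I. P i x"
proof (rule ccontr)
  assume "\<not> (\<exists>x\<in>A. \<forall>i\<in>I. P i x)"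
  then have "A \<subseteq> (\<Union>i\<in>I. {x\<in>A. \<not> P i x})" by blast
  then have "card A \<le> card (\<Union>i\<in>I. {x\<in>A. \<not> P i x})"
    by (intro card_mono finite_subset[OF _ \<open>finite A\<close>]) auto
  also have "\<dots> \<le> (\<Sum>i\<in>I. card {x\<in>A. \<not> P i x})"
    using \<open>finite I\<close> by (rule card_UN_le)
  finally have "real (card A) \<le> (\<Sum>i\<in>I. real (card {x\<in>A. \<not> P i x}))"
    by (simp flip: of_nat_sum)
  also have "\<dots> \<le> (\<Sum>i\<in>I. p * card A)"
    using bad by (rule sum_mono)
  also have "\<dots> = (card I * p) * card A" by simp
  also have "\<dots> < card A"
    using small \<open>finite A\<close> \<open>A \<noteq> {}\<close> by (simp add: card_gt_0_iff)
  finally show False by simp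
qed

theorem johnson_lindenstrauss_sign_matrices:
  fixes z :: "'i \<Rightarrow> nat \<Rightarrow> real"
  assumes "finite I" "0 < \<epsilon>" "\<epsilon> \<le> 1" "2 * real (card I) * exp (- real k * \<epsilon>^2 / 8) < 1"
  shows "\<exists>R\<in>sign_matrices k d. \<forall>i\<in>I. preserves_sq_norm \<epsilon> k d R (z i)"
proof (rule counting_union_bound[where p = "2 * exp (- real k * \<epsilon>^2 / 8)"])
  show "real (card {R\<in>sign_matrices k d. \<not> preserves_sq_norm \<epsilon> k d R (z i)})
      \<le> 2 * exp (- real k * \<epsilon>^2 / 8) * card (sign_matrices k d)" for i
    using card_not_preserves_sq_norm[OF assms(2,3), of k d "z i"] by (simp only: mult_ac)
  show "real (card I) * (2 * exp (- real k * \<epsilon>^2 / 8)) < 1"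
    using assms(4) by (simp only: mult_ac)
qed (simp_all add: assms(1) sign_matrices_nonempty)

section \<open>Dimension reduction for shattered query sets\<close>

lemma separation_preserved:
  fixes a k A B A' B' :: real
  assumes a: "0 < a" "a < 1" and "0 < k" "0 \<le> A"
    and A': "A' \<le> (1 + a/4) * k * A" and B': "(1 - a/4) * k * B \<le> B'"
    and sep: "(1 + a) * sqrt A < sqrt B"
  shows "(1 + a/2) * sqrt A' < sqrt B'"
proof -
  have "0 \<le> (1 + a) * sqrt A" using a \<open>0 \<le> A\<close> by simp
  then have "0 < sqrt B" using sep by linarith
  have "((1 + a) * sqrt A)^2 < (sqrt B)^2"
    using sep \<open>0 \<le> (1 + a) * sqrt A\<close> by (rule power_strict_mono) simp
  then have sep2: "(1 + a)^2 * A < B"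
    using \<open>0 \<le> A\<close> \<open>0 < sqrt B\<close> by (simp add: power_mult_distrib)
  have "(1 + a/2)^2 * (1 + a/4) \<le> (1 - a/4) * (1 + a)^2"
  proof -
    have "(1 - a/4) * (1 + a)^2 - (1 + a/2)^2 * (1 + a/4) = a * (1/2 - 5/16 * a^2)"
      by (simp add: algebra_simps power2_eq_square)
    moreover have "a^2 \<le> 1" using a by (simp add: power_le_one)
    then have "0 \<le> a * (1/2 - 5/16 * a^2)" using a by (intro mult_nonneg_nonneg) auto
    ultimately show ?thesis by linarith
  qed
  have "(1 + a/2)^2 * A' \<le> (1 + a/2)^2 * ((1 + a/4) * k * A)"
    using A' by (rule mult_left_mono) simp
  also have "\<dots> = ((1 + a/2)^2 * (1 + a/4)) * (k * A)" by (simp add: mult_ac)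
  also have "\<dots> \<le> ((1 - a/4) * (1 + a)^2) * (k * A)"
    using \<open>(1 + a/2)^2 * (1 + a/4) \<le> (1 - a/4) * (1 + a)^2\<close> \<open>0 < k\<close> \<open>0 \<le> A\<close>
    by (intro mult_right_mono) simp_all
  also have "\<dots> = ((1 - a/4) * k) * ((1 + a)^2 * A)" by (simp add: mult_ac)
  also have "\<dots> < ((1 - a/4) * k) * B"
    using sep2 a \<open>0 < k\<close> by (intro mult_strict_left_mono) simp_all
  also have "\<dots> \<le> B'" using B' by (simp add: mult_ac)
  finally have "sqrt ((1 + a/2)^2 * A') < sqrt B'" by simp
  then show ?thesis using a by (simp add: real_sqrt_mult)
qed

lemma satisfies_mat_vec:
  assumes \<alpha>: "0 < \<alpha>" "\<alpha> < 1" and "0 < k"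
    and "preserves_sq_norm (\<alpha>/4) k d R (f u - f v)" "preserves_sq_norm (\<alpha>/4) k d R (f u - f w)"
    and "satisfies d \<alpha> f (u, v, w) b"
  shows "satisfies k (\<alpha>/2) (\<lambda>x. mat_vec d R (f x)) (u, v, w) b"
proof -
  have "(1 + \<alpha>/2) * l2dist k (mat_vec d R (f u)) (mat_vec d R (f y))
      < l2dist k (mat_vec d R (f u)) (mat_vec d R (f y'))"
    if "preserves_sq_norm (\<alpha>/4) k d R (f u - f y)" "preserves_sq_norm (\<alpha>/4) k d R (f u - f y')"
      and "(1 + \<alpha>) * l2dist d (f u) (f y) < l2dist d (f u) (f y')" for y y'
    unfolding l2dist_eq_sqrt_sq_norm mat_vec_diff[symmetric]
    by (rule separation_preserved[OF \<alpha>])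
      (use that \<open>0 < k\<close> in \<open>auto simp: preserves_sq_norm_def sq_norm_nonneg l2dist_eq_sqrt_sq_norm\<close>)
  then show ?thesis using assms by (cases b) (auto simp: satisfies_def)
qed

lemma dimension_suffices:
  fixes n k :: nat
  assumes n: "2 \<le> n" and \<alpha>: "0 < \<alpha>" and k: "1000 * ln n / \<alpha>^2 \<le> k"
  shows "2 * real (card ({0..<n} \<times> {0..<n})) * exp (- real k * (\<alpha>/4)^2 / 8) < 1"
proof -
  have "1000 * ln n \<le> k * \<alpha>^2" using k \<alpha> by (simp add: field_simps)
  moreover have "0 \<le> ln n" using n by simp
  ultimately have "7 * ln n \<le> k * (\<alpha>/4)^2 / 8" by (simp add: power_divide)
  then have "exp (- real k * (\<alpha>/4)^2 / 8) \<le> exp (- (7 * ln n))" by simp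
  also have "\<dots> = 1 / real n ^ 7"
    using n by (simp add: exp_minus exp_of_nat_mult[of 7 "ln n", simplified] inverse_eq_divide)
  finally have E: "exp (- real k * (\<alpha>/4)^2 / 8) \<le> 1 / real n ^ 7" .
  have "2 * real (card ({0..<n} \<times> {0..<n})) * exp (- real k * (\<alpha>/4)^2 / 8)
      = 2 * n^2 * exp (- real k * (\<alpha>/4)^2 / 8)"
    by (simp add: power2_eq_square)
  also have "\<dots> \<le> 2 * n^2 * (1 / real n ^ 7)"
    using E by (intro mult_left_mono) simp_all
  also have "\<dots> = 2 / real n ^ 5"
    using n by (simp add: field_simps power_add[symmetric] eval_nat_numeral)
  also have "\<dots> < 1"
  proof -
    have "(2::real)^5 \<le> real n ^ 5" using n by (intro power_mono) auto
    then show ?thesis by (simp add: divide_less_eq)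
  qed
  finally show ?thesis .
qed

lemma shattered_dimension_reduction:
  fixes n k :: nat
  assumes n: "2 \<le> n" and \<alpha>: "0 < \<alpha>" "\<alpha> < 1" and k: "1000 * ln n / \<alpha>^2 \<le> k"
    and sh: "shattered d \<alpha> {0..<n} Q"
  shows "shattered k (\<alpha>/2) {0..<n} Q"
  unfolding shattered_def
proof (intro conjI allI)
  show Q: "Q \<subseteq> {0..<n} \<times> {0..<n} \<times> {0..<n}" using sh by (simp add: shattered_def)
  fix L :: "nat \<times> nat \<times> nat \<Rightarrow> bool"
  obtain f where f: "\<forall>q\<in>Q. satisfies d \<alpha> f q (L q)" using sh unfolding shattered_def by blast
  have "\<exists>R\<in>sign_matrices k d. \<forall>p\<in>{0..<n} \<times> {0..<n}.
      preserves_sq_norm (\<alpha>/4) k d R (f (fst p) - f (snd p))"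
    using \<alpha> dimension_suffices[OF n \<alpha>(1) k] by (intro johnson_lindenstrauss_sign_matrices) auto
  then obtain R where R: "\<forall>p\<in>{0..<n} \<times> {0..<n}. preserves_sq_norm (\<alpha>/4) k d R (f (fst p) - f (snd p))"
    by blast
  have "0 < 1000 * ln n / \<alpha>^2" using n \<alpha> by (intro divide_pos_pos) simp_all
  then have "0 < k" using k by linarith
  show "\<exists>g. \<forall>q\<in>Q. satisfies k (\<alpha>/2) g q (L q)"
  proof (intro exI ballI)
    fix q assume "q \<in> Q"
    then obtain u v w where q: "q = (u, v, w)" and uvw: "u < n" "v < n" "w < n" using Q by auto
    have Ru: "preserves_sq_norm (\<alpha>/4) k d R (f u - f y)" if "y < n" for y
      using R uvw(1) that by auto
    show "satisfies k (\<alpha>/2) (\<lambda>x. mat_vec d R (f x)) q (L q)"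
      unfolding q using f \<open>q \<in> Q\<close> q
      by (intro satisfies_mat_vec[OF \<alpha> \<open>0 < k\<close> Ru[OF uvw(2)] Ru[OF uvw(3)]]) simp
  qed
qed

lemma not_satisfies_coincident:
  assumes "0 \<le> \<alpha>"
  shows "\<not> satisfies d \<alpha> f (u, v, v) b"
proof -
  have "l2dist d (f u) (f v) \<le> (1 + \<alpha>) * l2dist d (f u) (f v)"
    using mult_right_mono[of 1 "1 + \<alpha>" "l2dist d (f u) (f v)"] assms
    by (simp add: l2dist_eq_sqrt_sq_norm sq_norm_nonneg)
  then show ?thesis by (simp add: satisfies_def)
qed

lemma shattered_at_most_one_point:
  fixes n :: nat
  assumes "shattered d \<alpha> {0..<n} Q" "n \<le> 1" "0 \<le> \<alpha>"
  shows "Q = {}"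
proof -
  obtain f where f: "\<forall>q\<in>Q. satisfies d \<alpha> f q True"
    using assms(1) unfolding shattered_def by (metis (full_types))
  have "Q \<subseteq> {0..<n} \<times> {0..<n} \<times> {0..<n}"
    using assms(1) by (simp add: shattered_def)
  also have "\<dots> \<subseteq> {(0, 0, 0)}" using assms(2) by auto
  finally have "Q \<subseteq> {(0, 0, 0)}" .
  moreover have "(0, 0, 0) \<notin> Q"
    using f not_satisfies_coincident[OF assms(3), of d f 0 0 True] by blast
  ultimately show ?thesis by blast
qed

lemma T_mono:
  assumes "\<And>Q. shattered d \<alpha> {0..<n} Q \<Longrightarrow> shattered k \<beta> {0..<n} Q"
  shows "T n d \<alpha> \<le> T n k \<beta>"
proof -
  have "{card Q | Q. shattered k \<beta> {0..<n} Q} \<subseteq> card ` Pow ({0..<n} \<times> {0..<n} \<times> {0..<n})"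
    by (auto simp: shattered_def)
  then have "finite {card Q | Q. shattered k \<beta> {0..<n} Q}"
    by (rule finite_subset) simp
  moreover have "shattered d \<alpha> {0..<n} {}" by (simp add: shattered_def)
  ultimately show ?thesis
    unfolding T_def using assms by (intro Max_mono) blast+
qed

theorem mainTheorem11:
  fixes n d :: nat and \<alpha> :: real
  assumes "0 < \<alpha>" and "\<alpha> < 1"
  shows "T n d \<alpha> \<le> T n (nat \<lceil>1000 * ln (real n) / \<alpha>^2\<rceil>) (\<alpha> / 2)"
proof (rule T_mono)
  fix Q assume sh: "shattered d \<alpha> {0..<n} Q"
  show "shattered (nat \<lceil>1000 * ln (real n) / \<alpha>^2\<rceil>) (\<alpha> / 2) {0..<n} Q"
  proof (cases "2 \<le> n")
    case True
    then show ?thesis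
      using assms sh real_nat_ceiling_ge by (intro shattered_dimension_reduction) auto
  next
    case False
    then have "Q = {}" using shattered_at_most_one_point[OF sh] assms by simp
    then show ?thesis by (simp add: shattered_def)
  qed
qed

end
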